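(* In the model with two recommendation thresholds $0<R_1\le R_2<1$, suppose $F$ is symmetric ($F(-i)=1-F(i)$ for all $i$), and let $\sigma=q_H/q_L$. Then the value $V(R_1,R_2)$ of the recommendation system is (i) decreasing in $R_1$ if $\sigma<1$, and (ii) increasing in $R_2$ if $\sigma>1$.
   Context: Setting. Consumer types are $i\in[-1/2,1/2]$, distributed according to a continuous cumulative distribution function $F$ with full support on $[-1/2,1/2]$. A product has a quality vector $(Q_1,Q_2)\in\{0,1\}^2$; a type-$i$ consumer gets payoff $(1/2+i)Q_1+(1/2-i)Q_2$ from it. The versions $(1,1),(1,0),(0,1),(0,0)$ have prior probabilities $q_H,q_1,q_2,q_L$ respectively, all strictly positive and summing to $1$. One product carries a recommendation from a sender whose type is drawn from $F$ independently of the product. Given thresholds $0<R_1\le R_2<1$, the sender gives a buy recommendation $B$ if her payoff from the product is at least $R_2$, a don't-buy recommendation $D$ if it is below $R_1$, and a neutral recommendation $N$ if it lies in $[R_1,R_2)$. For $r\in\{B,N,D\}$, let $\pi^r$ be the probability of recommendation $r$ and $(p_H^r,p_1^r,p_2^r,p_L^r)$ the Bayesian posterior over $(1,1),(1,0),(0,1),(0,0)$ given $r$ (when $\pi^r>0$). Let $U_i^r=p_H^r+(1/2+i)p_1^r+(1/2-i)p_2^r$ and $U_i^0=q_H+(1/2+i)q_1+(1/2-i)q_2$ (expected payoff from an unrecommended alternative). The value of the recommendation system is $V(R_1,R_2)=\sum_{r\in\{B,N,D\}:\,\pi^r>0}\pi^r\int_{-1/2}^{1/2}\max\{U_i^r-U_i^0,0\}\,dF(i)$,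 the expected payoff gain of a receiver drawn from $F$ who, after each recommendation, optimally chooses between the recommended product and an alternative. *)

theory Defs
  imports "HOL-Analysis.Analysis"
begin

text \<open>A product version is a quality vector (Q1,Q2) in {0,1}^2,
  encoded as a pair of booleans. The type distribution is given by its CDF F on the reals
  (F = 0 below -1/2, F = 1 above 1/2); the corresponding probability measure is
  interval_measure F.\<close>

datatype recom = B | N | D

definition type_measure :: "(real \<Rightarrow> real) \<Rightarrow> real measure" where
  "type_measure F = interval_measure F"

definition payoff :: "real \<Rightarrow> bool \<times> bool \<Rightarrow> real" where
  "payoff i v = (1/2 + i) * of_bool (fst v) + (1/2 - i) * of_bool (snd v)"

definition prior :: "real \<Rightarrow> real \<Rightarrow> real \<Rightarrow> real \<Rightarrow> bool \<times> bool \<Rightarrow> real" where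
  "prior qH q1 q2 qL v =
     (case v of (True, True) \<Rightarrow> qH | (True, False) \<Rightarrow> q1 | (False, True) \<Rightarrow> q2 | (False, False) \<Rightarrow> qL)"

definition recommend :: "real \<Rightarrow> real \<Rightarrow> real \<Rightarrow> recom" where
  "recommend R1 R2 x = (if R2 \<le> x then B else if x < R1 then D else N)"

definition rec_lik :: "(real \<Rightarrow> real) \<Rightarrow> real \<Rightarrow> real \<Rightarrow> recom \<Rightarrow> bool \<times> bool \<Rightarrow> real" where
  "rec_lik F R1 R2 r v =
     measure (type_measure F) {s \<in> {-1/2..1/2}. recommend R1 R2 (payoff s v) = r}"

definition rec_prob :: "(real \<Rightarrow> real) \<Rightarrow> real \<Rightarrow> real \<Rightarrow> real \<Rightarrow> real \<Rightarrow> real \<Rightarrow> real \<Rightarrow> recom \<Rightarrow> real" where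
  "rec_prob F qH q1 q2 qL R1 R2 r = (\<Sum>v\<in>UNIV. prior qH q1 q2 qL v * rec_lik F R1 R2 r v)"

definition posterior :: "(real \<Rightarrow> real) \<Rightarrow> real \<Rightarrow> real \<Rightarrow> real \<Rightarrow> real \<Rightarrow> real \<Rightarrow> real \<Rightarrow> recom \<Rightarrow> bool \<times> bool \<Rightarrow> real" where
  "posterior F qH q1 q2 qL R1 R2 r v =
     prior qH q1 q2 qL v * rec_lik F R1 R2 r v / rec_prob F qH q1 q2 qL R1 R2 r"

definition U_rec :: "(real \<Rightarrow> real) \<Rightarrow> real \<Rightarrow> real \<Rightarrow> real \<Rightarrow> real \<Rightarrow> real \<Rightarrow> real \<Rightarrow> recom \<Rightarrow> real \<Rightarrow> real" where
  "U_rec F qH q1 q2 qL R1 R2 r i =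
     posterior F qH q1 q2 qL R1 R2 r (True, True)
     + (1/2 + i) * posterior F qH q1 q2 qL R1 R2 r (True, False)
     + (1/2 - i) * posterior F qH q1 q2 qL R1 R2 r (False, True)"

definition U0 :: "real \<Rightarrow> real \<Rightarrow> real \<Rightarrow> real \<Rightarrow> real" where
  "U0 qH q1 q2 i = qH + (1/2 + i) * q1 + (1/2 - i) * q2"

definition value_rec :: "(real \<Rightarrow> real) \<Rightarrow> real \<Rightarrow> real \<Rightarrow> real \<Rightarrow> real \<Rightarrow> real \<Rightarrow> real \<Rightarrow> real" where
  "value_rec F qH q1 q2 qL R1 R2 =
     (\<Sum>r\<in>{B, N, D}.
        if rec_prob F qH q1 q2 qL R1 R2 r > 0 then
          rec_prob F qH q1 q2 qL R1 R2 r *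
          (LINT i:{-1/2..1/2}|type_measure F.
              max (U_rec F qH q1 q2 qL R1 R2 r i - U0 qH q1 q2 i) 0)
        else 0)"

end

theory Submission
  imports Defs "HOL-Probability.Distribution_Functions"
begin

text \<open>By symmetry of \<open>F\<close> the two single-quality versions (1,0) and (0,1) receive each
  recommendation with the same likelihood: \<open>B\<close> with \<open>1 - F(R\<^sub>2 - 1/2)\<close>,
  \<open>N\<close> with \<open>F(R\<^sub>2 - 1/2) - F(R\<^sub>1 - 1/2)\<close> and \<open>D\<close> with \<open>F(R\<^sub>1 - 1/2)\<close>.
  Hence every receiver buys after \<open>B\<close>, nobody buys after \<open>D\<close>, and after \<open>N\<close> the
  weighted gain of type \<open>i\<close> is proportional to
  \<open>h(i) = (q\<^sub>H + q\<^sub>L) w(i) - (q\<^sub>1 + q\<^sub>2) q\<^sub>H\<close>,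
  where \<open>w(i) = (1/2 + i) q\<^sub>1 + (1/2 - i) q\<^sub>2\<close>. Adding up the three terms gives
  \<open>V(R\<^sub>1, R\<^sub>2) = E[q\<^sub>L (q\<^sub>H + w)] + F(R\<^sub>2 - 1/2) E[h\<^sup>-] - F(R\<^sub>1 - 1/2) E[h\<^sup>+]\<close>.
  Since \<open>h\<close> is affine with \<open>h(0) = (q\<^sub>1 + q\<^sub>2)(q\<^sub>L - q\<^sub>H)/2\<close>, \<open>E[h\<^sup>+] > 0\<close>
  when \<open>\<sigma> < 1\<close> and \<open>E[h\<^sup>-] > 0\<close> when \<open>\<sigma> > 1\<close>, while \<open>F\<close> is strictly
  increasing on the type space.\<close>

definition mixed_payoff :: "real \<Rightarrow> real \<Rightarrow> real \<Rightarrow> real" where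
  "mixed_payoff q1 q2 i = (1/2 + i) * q1 + (1/2 - i) * q2"

text \<open>\<open>\<pi>\<^sup>N (U\<^sub>i\<^sup>N - U\<^sub>i\<^sup>0)\<close> per unit of the likelihood of \<open>N\<close> for a single-quality version.\<close>
definition neutral_gain :: "real \<Rightarrow> real \<Rightarrow> real \<Rightarrow> real \<Rightarrow> real \<Rightarrow> real" where
  "neutral_gain qH q1 q2 qL i = (qH + qL) * mixed_payoff q1 q2 i - (q1 + q2) * qH"

definition mixed_lik :: "(real \<Rightarrow> real) \<Rightarrow> real \<Rightarrow> real \<Rightarrow> recom \<Rightarrow> real" where
  "mixed_lik F R1 R2 r =
     (case r of B \<Rightarrow> 1 - F (R2 - 1/2) | N \<Rightarrow> F (R2 - 1/2) - F (R1 - 1/2) | D \<Rightarrow> F (R1 - 1/2))"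

text \<open>\<open>\<pi>\<^sup>r (U\<^sub>i\<^sup>r - U\<^sub>i\<^sup>0)\<close> with the division by \<open>\<pi>\<^sup>r\<close> cleared, so that it is \<open>0\<close> rather than junk
  when \<open>\<pi>\<^sup>r = 0\<close>.\<close>
definition rec_gain ::
    "(real \<Rightarrow> real) \<Rightarrow> real \<Rightarrow> real \<Rightarrow> real \<Rightarrow> real \<Rightarrow> real \<Rightarrow> real \<Rightarrow> recom \<Rightarrow> real \<Rightarrow> real" where
  "rec_gain F qH q1 q2 qL R1 R2 r i =
     qH * of_bool (r = B) + mixed_lik F R1 R2 r * mixed_payoff q1 q2 i
     - rec_prob F qH q1 q2 qL R1 R2 r * (qH + mixed_payoff q1 q2 i)"

lemma UNIV_bool_pair: "(UNIV :: (bool \<times> bool) set) = {(True, True), (True, False), (False, True), (False, False)}"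
  by auto

lemma U0_eq_mixed_payoff: "U0 qH q1 q2 i = qH + mixed_payoff q1 q2 i"
  by (simp add: U0_def mixed_payoff_def)

lemma continuous_on_mixed_payoff [continuous_intros]:
  "continuous_on S (\<lambda>i. mixed_payoff q1 q2 i)"
  unfolding mixed_payoff_def by (intro continuous_intros)

lemma continuous_on_neutral_gain [continuous_intros]:
  "continuous_on S (\<lambda>i. neutral_gain qH q1 q2 qL i)"
  unfolding neutral_gain_def by (intro continuous_intros)

lemma continuous_on_rec_gain [continuous_intros]:
  "continuous_on S (\<lambda>i. rec_gain F qH q1 q2 qL R1 R2 r i)"
  unfolding rec_gain_def by (intro continuous_intros)

lemma mixed_payoff_bounds:
  assumes "i \<in> {-1/2..1/2}" "0 \<le> q1" "0 \<le> q2"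
  shows "0 \<le> mixed_payoff q1 q2 i" "mixed_payoff q1 q2 i \<le> q1 + q2"
proof -
  have "0 \<le> (1/2 + i) * q1" "0 \<le> (1/2 - i) * q2" "0 \<le> (1/2 - i) * q1" "0 \<le> (1/2 + i) * q2"
    using assms by simp_all
  then show "0 \<le> mixed_payoff q1 q2 i" "mixed_payoff q1 q2 i \<le> q1 + q2"
    unfolding mixed_payoff_def by (simp_all add: algebra_simps)
qed

lemma neutral_gain_affine:
  "neutral_gain qH q1 q2 qL i = (q1 + q2) * (qL - qH) / 2 + (qH + qL) * (q1 - q2) * i"
  by (simp add: neutral_gain_def mixed_payoff_def field_simps)

abbreviation type_mean :: "(real \<Rightarrow> real) \<Rightarrow> (real \<Rightarrow> real) \<Rightarrow> real" where
  "type_mean F f \<equiv> set_lebesgue_integral (type_measure F) {-1/2..1/2} f"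

context
  fixes F :: "real \<Rightarrow> real"
  assumes F_mono: "mono F"
    and F_cont: "continuous_on UNIV F"
    and F_low: "\<And>x. x \<le> -1/2 \<Longrightarrow> F x = 0"
    and F_high: "\<And>x. 1/2 \<le> x \<Longrightarrow> F x = 1"
begin

lemma F_le: "x \<le> y \<Longrightarrow> F x \<le> F y"
  using F_mono by (rule monoD)

lemma F_nonneg: "0 \<le> F x"
  using F_le[of "min x (-1/2)" x] F_low[of "min x (-1/2)"] by simp

lemma F_le_1: "F x \<le> 1"
  using F_le[of x "max x (1/2)"] F_high[of "max x (1/2)"] by simp

lemma prob_space_type_measure: "prob_space (type_measure F)"
proof -
  have "real_distribution (interval_measure F)"
  proof (rule real_distribution_interval_measure)
    show "continuous (at_right a) F" for a
      using F_cont by (simp add: continuous_on_eq_continuous_within continuous_at_imp_continuous_at_within)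
    show "(F \<longlongrightarrow> 0) at_bot"
      by (rule tendsto_eventually) (auto simp: eventually_at_bot_linorder intro!: exI[of _ "-1"] F_low)
    show "(F \<longlongrightarrow> 1) at_top"
      by (rule tendsto_eventually) (auto simp: eventually_at_top_linorder intro!: exI[of _ 1] F_high)
  qed (rule F_le)
  then show ?thesis
    unfolding type_measure_def by (simp add: real_distribution_def)
qed

lemma sets_type_measure [simp]: "sets (type_measure F) = sets borel"
  by (simp add: type_measure_def)

lemma measure_type_measure_Icc: "x \<le> y \<Longrightarrow> measure (type_measure F) {x..y} = F y - F x"
  unfolding type_measure_def measure_def
  using emeasure_interval_measure_Icc[of x y F, OF _ F_le F_cont] F_le[of x y] by simp

text \<open>Atoms are null because \<open>F\<close> is continuous, so open and closed endpoints do not matter.\<close>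
lemma measure_type_measure_between:
  assumes "A \<in> sets borel" "{x<..<y} \<subseteq> A" "A \<subseteq> {x..y}" "x \<le> y"
  shows "measure (type_measure F) A = F y - F x"
proof (rule antisym)
  interpret type_prob: prob_space "type_measure F"
    by (rule prob_space_type_measure)
  have "measure (type_measure F) A \<le> measure (type_measure F) {x..y}"
    using assms by (intro type_prob.finite_measure_mono) auto
  then show "measure (type_measure F) A \<le> F y - F x"
    using measure_type_measure_Icc[OF assms(4)] by simp
  have "{x..y} \<subseteq> {x..x} \<union> (A \<union> {y..y})"
  proof
    fix t assume "t \<in> {x..y}"
    then show "t \<in> {x..x} \<union> (A \<union> {y..y})"
      using assms(2) by (cases "t = x \<or> t = y") auto
  qed
  then have "measure (type_measure F) {x..y} \<le> measure (type_measure F) ({x..x} \<union> (A \<union> {y..y}))"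
    using assms by (intro type_prob.finite_measure_mono) auto
  also have "\<dots> \<le> measure (type_measure F) {x..x} + (measure (type_measure F) A + measure (type_measure F) {y..y})"
    using assms by (intro order.trans[OF measure_subadditive] add_left_mono measure_subadditive)
       (auto simp: type_prob.emeasure_finite)
  also have "\<dots> = measure (type_measure F) A"
    using measure_type_measure_Icc[of x x] measure_type_measure_Icc[of y y] by simp
  finally show "F y - F x \<le> measure (type_measure F) A"
    using measure_type_measure_Icc[OF assms(4)] by simp
qed

lemma set_integrable_continuous:
  assumes "continuous_on UNIV f"
  shows "set_integrable (type_measure F) {-1/2..1/2} (f :: real \<Rightarrow> real)"
proof -
  interpret type_prob: prob_space "type_measure F"
    by (rule prob_space_type_measure)
  have "compact (f ` {-1/2..1/2})"
    by (rule compact_continuous_image) (auto intro: continuous_on_subset[OF assms])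
  then obtain C where C: "\<And>x. x \<in> {-1/2..1/2} \<Longrightarrow> norm (f x) \<le> C"
    using compact_imp_bounded bounded_iff by (metis image_eqI)
  have measurable: "f \<in> borel_measurable (type_measure F)"
    using borel_measurable_continuous_onI[OF assms]
    by (simp add: measurable_cong_sets[OF sets_interval_measure refl] type_measure_def)
  show ?thesis
    unfolding set_integrable_def
  proof (rule type_prob.integrable_const_bound[where B = "max C 0"])
    show "AE x in type_measure F. norm (indicator {-1/2..1/2} x *\<^sub>R f x) \<le> max C 0"
      using C by (intro AE_I2) (force simp: indicator_def)
    show "(\<lambda>x. indicator {-1/2..1/2} x *\<^sub>R f x) \<in> borel_measurable (type_measure F)"
      using measurable by (intro borel_measurable_scaleR borel_measurable_indicator) auto
  qed
qed

lemma type_mean_pos: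
  assumes "strict_mono_on {-1/2..1/2} F" "continuous_on UNIV g"
    and "\<And>i. i \<in> {-1/2..1/2} \<Longrightarrow> 0 \<le> g i"
    and "-1/2 \<le> x" "x < y" "y \<le> 1/2" "0 < \<epsilon>" "\<And>i. i \<in> {x..y} \<Longrightarrow> \<epsilon> \<le> g i"
  shows "0 < type_mean F g"
proof -
  interpret type_prob: prob_space "type_measure F"
    by (rule prob_space_type_measure)
  have indicator_inside: "indicator {-1/2..1/2} i *\<^sub>R (\<epsilon> * indicator {x..y} i) = \<epsilon> * indicator {x..y} i"
    for i :: real
    using assms(4-6) by (auto simp: indicator_def)
  have step_integrable: "set_integrable (type_measure F) {-1/2..1/2} (\<lambda>i. \<epsilon> * indicator {x..y} i)"
    unfolding set_integrable_def indicator_inside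
    by (intro integrable_mult_right integrable_real_indicator)
       (auto simp: less_top[symmetric] type_prob.emeasure_finite)
  have "F x < F y"
    using assms(4-6) by (intro strict_mono_onD[OF assms(1)]) auto
  then have "0 < \<epsilon> * (F y - F x)"
    using assms(7) by simp
  also have "\<epsilon> * (F y - F x) = type_mean F (\<lambda>i. \<epsilon> * indicator {x..y} i)"
    unfolding set_lebesgue_integral_def indicator_inside
    using measure_type_measure_Icc[of x y] assms(5) by simp
  also have "\<dots> \<le> type_mean F g"
    using assms(3,7,8)
    by (intro set_integral_mono[OF step_integrable set_integrable_continuous[OF assms(2)]])
       (auto simp: indicator_def)
  finally show ?thesis .
qed

text \<open>On one half of the type space \<open>b * i \<ge> 0\<close>, so the integrand is at least \<open>a\<close> there.\<close>
lemma type_mean_pos_part_affine: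
  assumes "strict_mono_on {-1/2..1/2} F" "0 < a"
  shows "0 < type_mean F (\<lambda>i. max (a + b * i) 0)"
proof -
  obtain x y :: real where xy: "-1/2 \<le> x" "x < y" "y \<le> 1/2" and sign: "\<And>i. i \<in> {x..y} \<Longrightarrow> 0 \<le> b * i"
  proof (cases "0 \<le> b")
    case True
    then show ?thesis by (intro that[of 0 "1/2"]) auto
  next
    case False
    then show ?thesis by (intro that[of "-1/2" 0]) (auto simp: mult_nonpos_nonpos)
  qed
  have "a \<le> max (a + b * i) 0" if "i \<in> {x..y}" for i
    using sign[OF that] by simp
  then show ?thesis
    by (intro type_mean_pos[OF assms(1) _ _ xy assms(2)]) (auto intro!: continuous_intros)
qed

context
  fixes R1 R2 :: real
  assumes thresholds: "0 < R1" "R1 \<le> R2" "R2 < 1"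
begin

lemma mixed_lik_nonneg: "0 \<le> mixed_lik F R1 R2 r"
  using thresholds F_le[of "R1 - 1/2" "R2 - 1/2"] F_nonneg F_le_1
  by (cases r) (auto simp: mixed_lik_def)

lemma rec_lik_True_True: "rec_lik F R1 R2 r (True, True) = of_bool (r = B)"
proof -
  have "{s \<in> {-1/2..1/2}. recommend R1 R2 (payoff s (True, True)) = r}
      = (if r = B then {-1/2..1/2} else {})"
    using thresholds by (auto simp: recommend_def payoff_def)
  then show ?thesis
    unfolding rec_lik_def using measure_type_measure_Icc[of "-1/2" "1/2"] F_low F_high by simp
qed

lemma rec_lik_False_False: "rec_lik F R1 R2 r (False, False) = of_bool (r = D)"
proof -
  have "{s \<in> {-1/2..1/2}. recommend R1 R2 (payoff s (False, False)) = r}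
      = (if r = D then {-1/2..1/2} else {})"
    using thresholds by (auto simp: recommend_def payoff_def)
  then show ?thesis
    unfolding rec_lik_def using measure_type_measure_Icc[of "-1/2" "1/2"] F_low F_high by simp
qed

lemma rec_lik_True_False: "rec_lik F R1 R2 r (True, False) = mixed_lik F R1 R2 r"
proof (cases r)
  case B
  have "{s \<in> {-1/2..1/2}. recommend R1 R2 (payoff s (True, False)) = B} = {R2 - 1/2..1/2}"
    using thresholds by (auto simp: recommend_def payoff_def)
  then show ?thesis
    using B thresholds measure_type_measure_Icc[of "R2 - 1/2" "1/2"] F_high
    by (simp add: rec_lik_def mixed_lik_def)
next
  case N
  have "{s \<in> {-1/2..1/2}. recommend R1 R2 (payoff s (True, False)) = N} = {R1 - 1/2..<R2 - 1/2}"
    using thresholds by (auto simp: recommend_def payoff_def)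
  moreover have "measure (type_measure F) {R1 - 1/2..<R2 - 1/2} = F (R2 - 1/2) - F (R1 - 1/2)"
    using thresholds by (intro measure_type_measure_between) auto
  ultimately show ?thesis
    using N by (simp add: rec_lik_def mixed_lik_def)
next
  case D
  have "{s \<in> {-1/2..1/2}. recommend R1 R2 (payoff s (True, False)) = D} = {-1/2..<R1 - 1/2}"
    using thresholds by (auto simp: recommend_def payoff_def)
  moreover have "measure (type_measure F) {-1/2..<R1 - 1/2} = F (R1 - 1/2) - F (-1/2)"
    using thresholds by (intro measure_type_measure_between) auto
  ultimately show ?thesis
    using D F_low[of "-1/2"] by (simp add: rec_lik_def mixed_lik_def)
qed

end

context
  assumes F_symm: "\<And>i. i \<in> {-1/2..1/2} \<Longrightarrow> F (-i) = 1 - F i"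
begin

lemma rec_lik_False_True:
  assumes "0 < R1" "R1 \<le> R2" "R2 < 1"
  shows "rec_lik F R1 R2 r (False, True) = mixed_lik F R1 R2 r"
proof -
  have reflect: "F (1/2 - R) = 1 - F (R - 1/2)" if "0 \<le> R" "R \<le> 1" for R
    using F_symm[of "R - 1/2"] that by simp
  show ?thesis
  proof (cases r)
    case B
    have "{s \<in> {-1/2..1/2}. recommend R1 R2 (payoff s (False, True)) = B} = {-1/2..1/2 - R2}"
      using assms by (auto simp: recommend_def payoff_def)
    then show ?thesis
      using B assms measure_type_measure_Icc[of "-1/2" "1/2 - R2"] F_low reflect[of R2]
      by (simp add: rec_lik_def mixed_lik_def)
  next
    case N
    have "{s \<in> {-1/2..1/2}. recommend R1 R2 (payoff s (False, True)) = N} = {1/2 - R2<..1/2 - R1}"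
      using assms by (auto simp: recommend_def payoff_def)
    moreover have "measure (type_measure F) {1/2 - R2<..1/2 - R1} = F (1/2 - R1) - F (1/2 - R2)"
      using assms by (intro measure_type_measure_between) auto
    ultimately show ?thesis
      using N assms reflect[of R1] reflect[of R2] by (simp add: rec_lik_def mixed_lik_def)
  next
    case D
    have "{s \<in> {-1/2..1/2}. recommend R1 R2 (payoff s (False, True)) = D} = {1/2 - R1<..1/2}"
      using assms by (auto simp: recommend_def payoff_def)
    moreover have "measure (type_measure F) {1/2 - R1<..1/2} = F (1/2) - F (1/2 - R1)"
      using assms by (intro measure_type_measure_between) auto
    ultimately show ?thesis
      using D assms reflect[of R1] F_high[of "1/2"] by (simp add: rec_lik_def mixed_lik_def)
  qed
qed

context
  fixes qH q1 q2 qL :: real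
  assumes q_pos: "0 < qH" "0 < q1" "0 < q2" "0 < qL"
    and q_sum: "qH + q1 + q2 + qL = 1"
begin

lemma qL_eq: "qL = 1 - qH - q1 - q2"
  using q_sum by simp

context
  fixes R1 R2 :: real
  assumes thresholds: "0 < R1" "R1 \<le> R2" "R2 < 1"
begin

lemma rec_prob_eq:
  "rec_prob F qH q1 q2 qL R1 R2 r
     = qH * of_bool (r = B) + (q1 + q2) * mixed_lik F R1 R2 r + qL * of_bool (r = D)"
  using thresholds
  by (simp add: rec_prob_def UNIV_bool_pair prior_def rec_lik_True_True rec_lik_False_False
      rec_lik_True_False rec_lik_False_True algebra_simps)

lemma rec_prob_mult_U_rec:
  assumes "0 < rec_prob F qH q1 q2 qL R1 R2 r"
  shows "rec_prob F qH q1 q2 qL R1 R2 r * U_rec F qH q1 q2 qL R1 R2 r i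
     = qH * of_bool (r = B) + mixed_lik F R1 R2 r * mixed_payoff q1 q2 i"
  using assms thresholds
  by (simp add: U_rec_def posterior_def prior_def rec_lik_True_True rec_lik_True_False
      rec_lik_False_True mixed_payoff_def field_simps)

lemma value_term_eq:
  "(if 0 < rec_prob F qH q1 q2 qL R1 R2 r then
      rec_prob F qH q1 q2 qL R1 R2 r
        * type_mean F (\<lambda>i. max (U_rec F qH q1 q2 qL R1 R2 r i - U0 qH q1 q2 i) 0)
    else 0)
   = type_mean F (\<lambda>i. max (rec_gain F qH q1 q2 qL R1 R2 r i) 0)"
proof (cases "0 < rec_prob F qH q1 q2 qL R1 R2 r")
  case True
  then have "rec_prob F qH q1 q2 qL R1 R2 r * max (U_rec F qH q1 q2 qL R1 R2 r i - U0 qH q1 q2 i) 0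
      = max (rec_gain F qH q1 q2 qL R1 R2 r i) 0" for i
    using rec_prob_mult_U_rec[OF True, of i] max_mult_distrib_left[of "rec_prob F qH q1 q2 qL R1 R2 r"]
    by (simp add: rec_gain_def U0_eq_mixed_payoff right_diff_distrib)
  then show ?thesis
    using True by (simp flip: set_integral_mult_right)
next
  case False
  have "r = N"
  proof (rule ccontr)
    assume "r \<noteq> N"
    then have "0 < rec_prob F qH q1 q2 qL R1 R2 r"
      using q_pos mixed_lik_nonneg[OF thresholds, of r]
      by (cases r) (simp_all add: rec_prob_eq add_pos_nonneg add_nonneg_pos)
    with False show False
      by simp
  qed
  have "\<not> 0 < (q1 + q2) * mixed_lik F R1 R2 N"
    using False \<open>r = N\<close> by (simp add: rec_prob_eq)
  then have "mixed_lik F R1 R2 N = 0"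
    using q_pos mixed_lik_nonneg[OF thresholds, of N] by (metis add_pos_pos less_eq_real_def mult_pos_pos)
  then show ?thesis
    using False \<open>r = N\<close> by (simp add: rec_gain_def rec_prob_eq)
qed

lemma rec_gain_B_eq:
  "rec_gain F qH q1 q2 qL R1 R2 B i
     = qL * (qH + mixed_payoff q1 q2 i) - F (R2 - 1/2) * neutral_gain qH q1 q2 qL i"
  by (simp add: rec_gain_def rec_prob_eq mixed_lik_def neutral_gain_def)
     (simp add: qL_eq algebra_simps)

lemma rec_gain_B_pos:
  assumes "i \<in> {-1/2..1/2}"
  shows "0 < rec_gain F qH q1 q2 qL R1 R2 B i"
proof -
  let ?w = "mixed_payoff q1 q2 i" and ?F2 = "F (R2 - 1/2)"
  have "rec_gain F qH q1 q2 qL R1 R2 B i = qH * qL + (1 - ?F2) * qL * ?w + ?F2 * qH * (q1 + q2 - ?w)"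
    by (simp add: rec_gain_B_eq neutral_gain_def) (simp add: qL_eq algebra_simps)
  moreover have "0 \<le> (1 - ?F2) * qL * ?w" "0 \<le> ?F2 * qH * (q1 + q2 - ?w)"
    using mixed_payoff_bounds[OF assms, of q1 q2] q_pos F_nonneg[of "R2 - 1/2"] F_le_1[of "R2 - 1/2"]
    by simp_all
  moreover have "0 < qH * qL"
    using q_pos by simp
  ultimately show ?thesis
    by linarith
qed

lemma rec_gain_N_eq:
  "rec_gain F qH q1 q2 qL R1 R2 N i = (F (R2 - 1/2) - F (R1 - 1/2)) * neutral_gain qH q1 q2 qL i"
  by (simp add: rec_gain_def rec_prob_eq mixed_lik_def neutral_gain_def)
     (simp add: qL_eq algebra_simps)

lemma rec_gain_D_neg:
  assumes "i \<in> {-1/2..1/2}"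
  shows "rec_gain F qH q1 q2 qL R1 R2 D i < 0"
proof -
  let ?w = "mixed_payoff q1 q2 i" and ?F1 = "F (R1 - 1/2)"
  have "rec_gain F qH q1 q2 qL R1 R2 D i = - (qH * qL + (1 - ?F1) * qL * ?w + ?F1 * qH * (q1 + q2 - ?w))"
    by (simp add: rec_gain_def rec_prob_eq mixed_lik_def) (simp add: qL_eq algebra_simps)
  moreover have "0 \<le> (1 - ?F1) * qL * ?w" "0 \<le> ?F1 * qH * (q1 + q2 - ?w)"
    using mixed_payoff_bounds[OF assms, of q1 q2] q_pos F_nonneg[of "R1 - 1/2"] F_le_1[of "R1 - 1/2"]
    by simp_all
  moreover have "0 < qH * qL"
    using q_pos by simp
  ultimately show ?thesis
    by linarith
qed

lemma rec_gain_pos_parts_sum: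
  assumes "i \<in> {-1/2..1/2}"
  shows "max (rec_gain F qH q1 q2 qL R1 R2 B i) 0 + max (rec_gain F qH q1 q2 qL R1 R2 N i) 0
      + max (rec_gain F qH q1 q2 qL R1 R2 D i) 0
    = qL * (qH + mixed_payoff q1 q2 i) + F (R2 - 1/2) * max (- neutral_gain qH q1 q2 qL i) 0
      - F (R1 - 1/2) * max (neutral_gain qH q1 q2 qL i) 0"
proof -
  have "max (rec_gain F qH q1 q2 qL R1 R2 N i) 0
      = (F (R2 - 1/2) - F (R1 - 1/2)) * max (neutral_gain qH q1 q2 qL i) 0"
    using mixed_lik_nonneg[OF thresholds, of N]
      max_mult_distrib_left[of "F (R2 - 1/2) - F (R1 - 1/2)" "neutral_gain qH q1 q2 qL i" 0]
    by (simp add: rec_gain_N_eq mixed_lik_def)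
  then show ?thesis
    using rec_gain_B_pos[OF assms] rec_gain_D_neg[OF assms]
    by (simp add: rec_gain_B_eq max_def algebra_simps)
qed

theorem value_rec_eq:
  "value_rec F qH q1 q2 qL R1 R2
     = type_mean F (\<lambda>i. qL * (qH + mixed_payoff q1 q2 i))
       + F (R2 - 1/2) * type_mean F (\<lambda>i. max (- neutral_gain qH q1 q2 qL i) 0)
       - F (R1 - 1/2) * type_mean F (\<lambda>i. max (neutral_gain qH q1 q2 qL i) 0)"
proof -
  let ?G = "\<lambda>r i. max (rec_gain F qH q1 q2 qL R1 R2 r i) 0"
  let ?base = "\<lambda>i. qL * (qH + mixed_payoff q1 q2 i)"
  let ?neg = "\<lambda>i. max (- neutral_gain qH q1 q2 qL i) 0"
  let ?pos = "\<lambda>i. max (neutral_gain qH q1 q2 qL i) 0"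
  have integrable: "set_integrable (type_measure F) {-1/2..1/2} (?G r)"
    "set_integrable (type_measure F) {-1/2..1/2} ?base"
    "set_integrable (type_measure F) {-1/2..1/2} ?neg"
    "set_integrable (type_measure F) {-1/2..1/2} ?pos" for r
    by (intro set_integrable_continuous continuous_intros)+
  have "value_rec F qH q1 q2 qL R1 R2 = type_mean F (?G B) + type_mean F (?G N) + type_mean F (?G D)"
    unfolding value_rec_def by (simp add: value_term_eq)
  also have "\<dots> = type_mean F (\<lambda>i. ?G B i + ?G N i) + type_mean F (?G D)"
    by (simp only: set_integral_add(2)[OF integrable(1) integrable(1)])
  also have "\<dots> = type_mean F (\<lambda>i. ?G B i + ?G N i + ?G D i)"
    by (intro set_integral_add(2)[symmetric] set_integral_add(1) integrable)
  also have "\<dots> = type_mean F (\<lambda>i. ?base i + F (R2 - 1/2) * ?neg i - F (R1 - 1/2) * ?pos i)"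
    by (rule set_lebesgue_integral_cong) (simp_all add: rec_gain_pos_parts_sum)
  also have "\<dots> = type_mean F (\<lambda>i. ?base i + F (R2 - 1/2) * ?neg i)
      - type_mean F (\<lambda>i. F (R1 - 1/2) * ?pos i)"
    by (intro set_integral_diff(2) set_integral_add(1) set_integrable_mult_right[OF integrable(4)]
        set_integrable_mult_right[OF integrable(3)] integrable(2))
  also have "\<dots> = type_mean F ?base + type_mean F (\<lambda>i. F (R2 - 1/2) * ?neg i)
      - type_mean F (\<lambda>i. F (R1 - 1/2) * ?pos i)"
    by (simp only: set_integral_add(2)[OF integrable(2) set_integrable_mult_right[OF integrable(3)]])
  also have "\<dots> = type_mean F ?base + F (R2 - 1/2) * type_mean F ?neg - F (R1 - 1/2) * type_mean F ?pos"
    by (simp only: set_integral_mult_right)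
  finally show ?thesis .
qed

end

lemma type_mean_pos_part_neutral_gain:
  assumes "strict_mono_on {-1/2..1/2} F" "qH < qL"
  shows "0 < type_mean F (\<lambda>i. max (neutral_gain qH q1 q2 qL i) 0)"
  unfolding neutral_gain_affine
  by (rule type_mean_pos_part_affine[OF assms(1)]) (use assms(2) q_pos in simp)

lemma type_mean_neg_part_neutral_gain:
  assumes "strict_mono_on {-1/2..1/2} F" "qL < qH"
  shows "0 < type_mean F (\<lambda>i. max (- neutral_gain qH q1 q2 qL i) 0)"
proof -
  have affine: "- neutral_gain qH q1 q2 qL i = (q1 + q2) * (qH - qL) / 2 + ((qH + qL) * (q2 - q1)) * i"
    for i
    unfolding neutral_gain_affine by (simp add: field_simps)
  show ?thesis
    unfolding affine by (rule type_mean_pos_part_affine[OF assms(1)]) (use assms(2) q_pos in simp)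
qed

lemma value_rec_strict_antimono_R1:
  assumes "strict_mono_on {-1/2..1/2} F" "qH < qL" "0 < R1" "R1 < R1'" "R1' \<le> R2" "R2 < 1"
  shows "value_rec F qH q1 q2 qL R1' R2 < value_rec F qH q1 q2 qL R1 R2"
proof -
  have "F (R1 - 1/2) < F (R1' - 1/2)"
    using assms(3-6) by (intro strict_mono_onD[OF assms(1)]) auto
  then have "F (R1 - 1/2) * type_mean F (\<lambda>i. max (neutral_gain qH q1 q2 qL i) 0)
      < F (R1' - 1/2) * type_mean F (\<lambda>i. max (neutral_gain qH q1 q2 qL i) 0)"
    using type_mean_pos_part_neutral_gain[OF assms(1,2)] by (rule mult_strict_right_mono)
  then show ?thesis
    using assms(3-6) by (simp add: value_rec_eq)
qed

lemma value_rec_strict_mono_R2: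
  assumes "strict_mono_on {-1/2..1/2} F" "qL < qH" "0 < R1" "R1 \<le> R2" "R2 < R2'" "R2' < 1"
  shows "value_rec F qH q1 q2 qL R1 R2 < value_rec F qH q1 q2 qL R1 R2'"
proof -
  have "F (R2 - 1/2) < F (R2' - 1/2)"
    using assms(3-6) by (intro strict_mono_onD[OF assms(1)]) auto
  then have "F (R2 - 1/2) * type_mean F (\<lambda>i. max (- neutral_gain qH q1 q2 qL i) 0)
      < F (R2' - 1/2) * type_mean F (\<lambda>i. max (- neutral_gain qH q1 q2 qL i) 0)"
    using type_mean_neg_part_neutral_gain[OF assms(1,2)] by (rule mult_strict_right_mono)
  then show ?thesis
    using assms(3-6) by (simp add: value_rec_eq)
qed

end

end

end

theorem proposition10:
  fixes F :: "real \<Rightarrow> real" and qH q1 q2 qL :: real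
  assumes F_mono: "mono F"
    and F_cont: "continuous_on UNIV F"
    and F_low: "\<And>x. x \<le> -1/2 \<Longrightarrow> F x = 0"
    and F_high: "\<And>x. 1/2 \<le> x \<Longrightarrow> F x = 1"
    and F_full_support: "strict_mono_on {-1/2..1/2} F"
    and F_symm: "\<And>i. i \<in> {-1/2..1/2} \<Longrightarrow> F (-i) = 1 - F i"
    and q_pos: "qH > 0" "q1 > 0" "q2 > 0" "qL > 0"
    and q_sum: "qH + q1 + q2 + qL = 1"
  shows "(qH / qL < 1 \<longrightarrow>
            (\<forall>R1 R1' R2. 0 < R1 \<and> R1 < R1' \<and> R1' \<le> R2 \<and> R2 < 1 \<longrightarrow>
               value_rec F qH q1 q2 qL R1' R2 < value_rec F qH q1 q2 qL R1 R2))
       \<and> (qH / qL > 1 \<longrightarrow>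
            (\<forall>R1 R2 R2'. 0 < R1 \<and> R1 \<le> R2 \<and> R2 < R2' \<and> R2' < 1 \<longrightarrow>
               value_rec F qH q1 q2 qL R1 R2 < value_rec F qH q1 q2 qL R1 R2'))"
proof (intro conjI impI allI)
  note model = F_mono F_cont F_low F_high F_symm q_pos q_sum
  fix R1 R1' R2 :: real
  assume "qH / qL < 1" and "0 < R1 \<and> R1 < R1' \<and> R1' \<le> R2 \<and> R2 < 1"
  moreover have "qH < qL"
    using \<open>qH / qL < 1\<close> q_pos(4) by (simp add: pos_divide_less_eq)
  ultimately show "value_rec F qH q1 q2 qL R1' R2 < value_rec F qH q1 q2 qL R1 R2"
    by (intro value_rec_strict_antimono_R1[OF model F_full_support]) auto
next
  note model = F_mono F_cont F_low F_high F_symm q_pos q_sum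
  fix R1 R2 R2' :: real
  assume "qH / qL > 1" and "0 < R1 \<and> R1 \<le> R2 \<and> R2 < R2' \<and> R2' < 1"
  moreover have "qL < qH"
    using \<open>qH / qL > 1\<close> q_pos(4) by (simp add: pos_less_divide_eq)
  ultimately show "value_rec F qH q1 q2 qL R1 R2 < value_rec F qH q1 q2 qL R1 R2'"
    by (intro value_rec_strict_mono_R2[OF model F_full_support]) auto
qed

end
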